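(* Let $M$ be a finite set and $q,\eta\in\Delta M$. Then $q$ can be induced from $\eta$ if and only if (1) $\mathrm{supp}(\eta)\subseteq\mathrm{supp}(q)$, and (2) $\mathbb{E}_\eta[\log q]=\mathbb{E}_q[\log q]$, i.e. $\sum_m\eta_m\log q_m=\sum_m q_m\log q_m$.
   Context: A belief $q\in\Delta M$ can be induced from $\eta\in\Delta M$ if there exists a set $\mathcal{F}\subseteq\{f:M\to\mathbb{R}\}$ such that $q$ is the unique maximizer of the Shannon entropy $\mathcal{H}(q')=-\sum_mq'_m\log q'_m$ over $\Delta_{\mathcal{D}}=\{q'\in\Delta M:\sum_mq'_mf(m)=\sum_m\eta_mf(m)\ \forall f\in\mathcal{F}\}$. Convention $0\log0=0$; sums are over the support where terms are otherwise undefined. *)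

theory Defs
  imports Main "HOL-Analysis.Analysis"
begin

definition beliefs :: "('m::finite \<Rightarrow> real) set" where
  "beliefs = {q. (\<forall>m. 0 \<le> q m) \<and> (\<Sum>m\<in>UNIV. q m) = 1}"

definition bsupp :: "('m::finite \<Rightarrow> real) \<Rightarrow> 'm set" where
  "bsupp q = {m. q m \<noteq> 0}"

text \<open>Shannon entropy, with the convention 0 log 0 = 0 (sum over the support).\<close>
definition entropy :: "('m::finite \<Rightarrow> real) \<Rightarrow> real" where
  "entropy q = - (\<Sum>m\<in>bsupp q. q m * ln (q m))"

definition feasible :: "('m::finite \<Rightarrow> real) set \<Rightarrow> ('m \<Rightarrow> real) \<Rightarrow> ('m \<Rightarrow> real) set" where
  "feasible F \<eta> = {q' \<in> beliefs. \<forall>f\<in>F. (\<Sum>m\<in>UNIV. q' m * f m) = (\<Sum>m\<in>UNIV. \<eta> m * f m)}"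

definition can_be_induced :: "('m::finite \<Rightarrow> real) \<Rightarrow> ('m \<Rightarrow> real) \<Rightarrow> bool" where
  "can_be_induced q \<eta> \<longleftrightarrow>
     (\<exists>F. q \<in> feasible F \<eta> \<and> (\<forall>q'\<in>feasible F \<eta>. q' \<noteq> q \<longrightarrow> entropy q' < entropy q))"

end

theory Submission
  imports Defs
begin

(* If supp \<eta> \<subseteq> supp q and E_\<eta>[ln q] = E_q[ln q], take F = {ln q, indicator of the
   complement of supp q}: every feasible q' is supported in supp q and has E_q'[ln q] = E_q[ln q],
   so Gibbs' inequality gives H(q') < H(q) = -E_q'[ln q] unless q' = q.
   Conversely, the mixtures q_t = (1 - t) q + t \<eta> satisfy every linear constraint that q does,
   so H(q_t) \<le> H(q) whenever q_t is a belief. Together with Gibbs' inequality this yields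
   t \<Sum> (\<eta> - q) ln q_t \<ge> 0. As t \<down> 0 the sum tends to -\<infinity> if \<eta> charges a zero of q,
   which is impossible; otherwise q_t is a belief for all small |t| and the sum tends to
   \<Sum> (\<eta> - q) ln q from both sides, which therefore vanishes. *)

lemma beliefs_nonneg: "q \<in> beliefs \<Longrightarrow> 0 \<le> q m"
  by (simp add: beliefs_def)

lemma beliefs_sum: "q \<in> beliefs \<Longrightarrow> (\<Sum>m\<in>UNIV. q m) = 1"
  by (simp add: beliefs_def)

lemma sum_bsupp_mult:
  fixes p g :: "'m::finite \<Rightarrow> real"
  shows "(\<Sum>m\<in>bsupp p. p m * g m) = (\<Sum>m\<in>UNIV. p m * g m)"
  unfolding bsupp_def by (intro sum.mono_neutral_left) auto

lemma entropy_eq_sum_UNIV: "entropy q = - (\<Sum>m\<in>UNIV. q m * ln (q m))"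
  unfolding entropy_def by (simp add: sum_bsupp_mult)

lemma bsupp_subset_iff_sum_indicator_eq_0:
  assumes "p \<in> beliefs"
  shows "bsupp p \<subseteq> S \<longleftrightarrow> (\<Sum>m\<in>UNIV. p m * indicator (- S) m) = 0"
proof -
  have "(\<Sum>m\<in>UNIV. p m * indicator (- S) m) = 0 \<longleftrightarrow> (\<forall>m. p m * indicator (- S) m = 0)"
    using assms by (subst sum_nonneg_eq_0_iff) (auto simp: beliefs_nonneg)
  then show ?thesis
    by (auto simp: bsupp_def indicator_def)
qed

lemma mult_ln_tangent_le:
  fixes a b :: real
  assumes "0 < a" "0 \<le> b"
  shows "b * ln a + b - a \<le> b * ln b"
proof (cases "b = 0")
  case False
  with assms have "b * ln (a / b) \<le> b * (a / b - 1)"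
    by (intro mult_left_mono ln_le_minus_one) auto
  with assms False show ?thesis
    by (simp add: ln_div algebra_simps)
qed (use assms in simp)

lemma mult_ln_tangent_less:
  fixes a b :: real
  assumes "0 < a" "0 \<le> b" "b \<noteq> a"
  shows "b * ln a + b - a < b * ln b"
proof (cases "b = 0")
  case False
  with assms have "ln (a / b) \<noteq> a / b - 1"
    using ln_eq_minus_one[of "a / b"] by auto
  with assms False have "ln (a / b) < a / b - 1"
    using ln_le_minus_one[of "a / b"] by simp
  with assms False have "b * ln (a / b) < b * (a / b - 1)"
    by (intro mult_strict_left_mono) auto
  with assms False show ?thesis
    by (simp add: ln_div algebra_simps)
qed (use assms in simp)

lemma gibbs_term_le:
  assumes "p \<in> beliefs" "r \<in> beliefs" "bsupp p \<subseteq> bsupp r"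
  shows "p m * ln (r m) + p m - r m \<le> p m * ln (p m)"
proof (cases "r m = 0")
  case True
  with assms(3) have "p m = 0" by (auto simp: bsupp_def)
  with True show ?thesis by simp
next
  case False
  moreover have "0 \<le> r m" "0 \<le> p m"
    using assms(1,2) by (simp_all add: beliefs_nonneg)
  ultimately show ?thesis
    by (intro mult_ln_tangent_le) auto
qed

lemma sum_gibbs_term:
  assumes "p \<in> beliefs" "r \<in> beliefs"
  shows "(\<Sum>m\<in>UNIV. p m * ln (r m) + p m - r m) = (\<Sum>m\<in>UNIV. p m * ln (r m))"
  using assms by (simp add: sum.distrib sum_subtractf beliefs_sum)

lemma gibbs_inequality:
  assumes "p \<in> beliefs" "r \<in> beliefs" "bsupp p \<subseteq> bsupp r"
  shows "(\<Sum>m\<in>UNIV. p m * ln (r m)) \<le> (\<Sum>m\<in>UNIV. p m * ln (p m))"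
proof -
  have "(\<Sum>m\<in>UNIV. p m * ln (r m) + p m - r m) \<le> (\<Sum>m\<in>UNIV. p m * ln (p m))"
    by (rule sum_mono) (rule gibbs_term_le[OF assms])
  then show ?thesis
    using sum_gibbs_term[OF assms(1,2)] by simp
qed

lemma gibbs_inequality_strict:
  assumes "p \<in> beliefs" "r \<in> beliefs" "bsupp p \<subseteq> bsupp r" "p \<noteq> r"
  shows "(\<Sum>m\<in>UNIV. p m * ln (r m)) < (\<Sum>m\<in>UNIV. p m * ln (p m))"
proof -
  obtain m0 where m0: "p m0 \<noteq> r m0" using assms(4) by auto
  with assms(3) have "r m0 \<noteq> 0" by (auto simp: bsupp_def)
  moreover have "0 \<le> r m0" "0 \<le> p m0"
    using assms(1,2) by (simp_all add: beliefs_nonneg)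
  ultimately have "p m0 * ln (r m0) + p m0 - r m0 < p m0 * ln (p m0)"
    using m0 by (intro mult_ln_tangent_less) auto
  then have "(\<Sum>m\<in>UNIV. p m * ln (r m) + p m - r m) < (\<Sum>m\<in>UNIV. p m * ln (p m))"
    by (intro sum_strict_mono_ex1) (auto intro: gibbs_term_le[OF assms(1-3)])
  then show ?thesis
    using sum_gibbs_term[OF assms(1,2)] by simp
qed

lemma can_be_induced_if_moment:
  assumes "q \<in> beliefs" "\<eta> \<in> beliefs" "bsupp \<eta> \<subseteq> bsupp q"
    and moment: "(\<Sum>m\<in>UNIV. \<eta> m * ln (q m)) = (\<Sum>m\<in>UNIV. q m * ln (q m))"
  shows "can_be_induced q \<eta>"
proof -
  define F where "F = {\<lambda>m. ln (q m), indicator (- bsupp q)}"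
  have outside_q: "(\<Sum>m\<in>UNIV. p m * indicator (- bsupp q) m) = 0"
    if "p \<in> beliefs" "bsupp p \<subseteq> bsupp q" for p
    using bsupp_subset_iff_sum_indicator_eq_0 that by blast
  have "q \<in> feasible F \<eta>"
    using assms(1) moment outside_q[OF assms(1)] outside_q[OF assms(2,3)]
    by (simp add: F_def feasible_def)
  moreover have "entropy q' < entropy q" if "q' \<in> feasible F \<eta>" "q' \<noteq> q" for q'
  proof -
    have q': "q' \<in> beliefs"
      and q'_ln: "(\<Sum>m\<in>UNIV. q' m * ln (q m)) = (\<Sum>m\<in>UNIV. \<eta> m * ln (q m))"
      and q'_ind: "(\<Sum>m\<in>UNIV. q' m * indicator (- bsupp q) m) = (\<Sum>m\<in>UNIV. \<eta> m * indicator (- bsupp q) m)"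
      using that(1) by (auto simp: F_def feasible_def)
    have "bsupp q' \<subseteq> bsupp q"
      using q'_ind outside_q[OF assms(2,3)] bsupp_subset_iff_sum_indicator_eq_0[OF q'] by simp
    then have "(\<Sum>m\<in>UNIV. q' m * ln (q m)) < (\<Sum>m\<in>UNIV. q' m * ln (q' m))"
      using gibbs_inequality_strict q' assms(1) that(2) by blast
    then show ?thesis
      using q'_ln moment by (simp add: entropy_eq_sum_UNIV)
  qed
  ultimately show ?thesis
    unfolding can_be_induced_def by (intro exI[of _ F]) auto
qed

definition mix :: "real \<Rightarrow> ('m \<Rightarrow> real) \<Rightarrow> ('m \<Rightarrow> real) \<Rightarrow> 'm \<Rightarrow> real" where
  "mix t q \<eta> m = (1 - t) * q m + t * \<eta> m"

lemma sum_mix_mult: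
  "(\<Sum>m\<in>UNIV. mix t q \<eta> m * f m) = (1 - t) * (\<Sum>m\<in>UNIV. q m * f m) + t * (\<Sum>m\<in>UNIV. \<eta> m * f m)"
  by (simp add: mix_def distrib_right sum.distrib sum_distrib_left mult.assoc)

lemma mix_mem_beliefs_iff:
  assumes "q \<in> beliefs" "\<eta> \<in> beliefs"
  shows "mix t q \<eta> \<in> beliefs \<longleftrightarrow> (\<forall>m. 0 \<le> mix t q \<eta> m)"
  using assms sum_mix_mult[of t q \<eta> "\<lambda>_. 1"] by (simp add: beliefs_def)

lemma mix_mem_feasible:
  assumes "q \<in> feasible F \<eta>" "mix t q \<eta> \<in> beliefs"
  shows "mix t q \<eta> \<in> feasible F \<eta>"
  using assms by (simp add: feasible_def sum_mix_mult left_diff_distrib)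

lemma tendsto_mix: "((\<lambda>t. mix t q \<eta> m) \<longlongrightarrow> q m) (at 0)"
proof -
  have "((\<lambda>t. (1 - t) * q m + t * \<eta> m) \<longlongrightarrow> (1 - 0) * q m + 0 * \<eta> m) (at 0)"
    by (intro tendsto_intros)
  then show ?thesis
    by (simp add: mix_def)
qed

lemma mix_on_segment:
  assumes "q \<in> beliefs" "\<eta> \<in> beliefs" "0 \<le> t" "t < 1"
  shows "mix t q \<eta> \<in> beliefs" "bsupp q \<subseteq> bsupp (mix t q \<eta>)"
proof -
  have nonneg: "0 \<le> (1 - t) * q m" "0 \<le> t * \<eta> m" for m
    using assms by (simp_all add: beliefs_nonneg)
  then show "mix t q \<eta> \<in> beliefs"
    using assms(1,2) by (simp add: mix_mem_beliefs_iff mix_def)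
  show "bsupp q \<subseteq> bsupp (mix t q \<eta>)"
  proof
    fix m
    assume "m \<in> bsupp q"
    then have "0 < q m"
      using beliefs_nonneg[OF assms(1), of m] by (simp add: bsupp_def)
    with assms(4) have "0 < (1 - t) * q m"
      by simp
    with nonneg(2)[of m] show "m \<in> bsupp (mix t q \<eta>)"
      by (simp add: bsupp_def mix_def)
  qed
qed

lemma eventually_mix_near_0:
  assumes "q \<in> beliefs" "\<eta> \<in> beliefs" "bsupp \<eta> \<subseteq> bsupp q"
  shows "\<forall>\<^sub>F t in at 0. mix t q \<eta> \<in> beliefs \<and> bsupp (mix t q \<eta>) = bsupp q"
proof -
  have "\<forall>\<^sub>F t in at 0. \<forall>m. 0 \<le> mix t q \<eta> m \<and> (mix t q \<eta> m = 0 \<longleftrightarrow> q m = 0)"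
  proof (rule eventually_all_finite)
    fix m
    show "\<forall>\<^sub>F t in at 0. 0 \<le> mix t q \<eta> m \<and> (mix t q \<eta> m = 0 \<longleftrightarrow> q m = 0)"
    proof (cases "q m = 0")
      case True
      with assms(3) have "\<eta> m = 0" by (auto simp: bsupp_def)
      with True show ?thesis by (simp add: mix_def)
    next
      case False
      with assms(1) have "0 < q m" by (simp add: beliefs_nonneg order_le_neq_trans)
      then have "\<forall>\<^sub>F t in at 0. 0 < mix t q \<eta> m"
        by (rule order_tendstoD(1)[OF tendsto_mix])
      then show ?thesis
        by (rule eventually_mono) (use False in auto)
    qed
  qed
  then show ?thesis
  proof eventually_elim
    case (elim t)
    then have "mix t q \<eta> \<in> beliefs"
      by (simp add: mix_mem_beliefs_iff[OF assms(1,2)])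
    moreover have "bsupp (mix t q \<eta>) = bsupp q"
      using elim by (simp add: bsupp_def)
    ultimately show ?case ..
  qed
qed

lemma sum_diff_mult_ln_nonneg_if_entropy_le:
  assumes "q \<in> beliefs" "p \<in> beliefs" "bsupp q \<subseteq> bsupp p" "entropy p \<le> entropy q"
  shows "0 \<le> (\<Sum>m\<in>UNIV. (p m - q m) * ln (p m))"
proof -
  have "(\<Sum>m\<in>UNIV. q m * ln (p m)) \<le> (\<Sum>m\<in>UNIV. q m * ln (q m))"
    by (rule gibbs_inequality[OF assms(1-3)])
  also have "\<dots> \<le> (\<Sum>m\<in>UNIV. p m * ln (p m))"
    using assms(4) by (simp add: entropy_eq_sum_UNIV)
  finally show ?thesis
    by (simp add: left_diff_distrib sum_subtractf)
qed

(* Minus the derivative of t \<mapsto> entropy (mix t q \<eta>). *)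
definition mix_slope :: "('m \<Rightarrow> real) \<Rightarrow> ('m \<Rightarrow> real) \<Rightarrow> real \<Rightarrow> real" where
  "mix_slope q \<eta> t = (\<Sum>m\<in>UNIV. (\<eta> m - q m) * ln (mix t q \<eta> m))"

lemma mix_slope_sign:
  assumes "q \<in> beliefs" "mix t q \<eta> \<in> beliefs" "bsupp q \<subseteq> bsupp (mix t q \<eta>)"
    and "entropy (mix t q \<eta>) \<le> entropy q"
  shows "0 \<le> t * mix_slope q \<eta> t"
proof -
  have "mix t q \<eta> m - q m = t * (\<eta> m - q m)" for m
    by (simp add: mix_def algebra_simps)
  then show ?thesis
    using sum_diff_mult_ln_nonneg_if_entropy_le[OF assms]
    by (simp add: mix_slope_def sum_distrib_left mult.assoc)
qed

lemma tendsto_mix_slope_term: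
  assumes "q m = 0 \<Longrightarrow> \<eta> m = 0"
  shows "((\<lambda>t. (\<eta> m - q m) * ln (mix t q \<eta> m)) \<longlongrightarrow> (\<eta> m - q m) * ln (q m)) (at 0)"
proof (cases "q m = 0")
  case False
  then show ?thesis
    by (intro tendsto_intros tendsto_mix)
qed (use assms in simp)

lemma mix_slope_tendsto_at_bot:
  assumes "q \<in> beliefs" "\<eta> \<in> beliefs" "\<not> bsupp \<eta> \<subseteq> bsupp q"
  shows "filterlim (mix_slope q \<eta>) at_bot (at_right 0)"
proof -
  define T where "T = bsupp \<eta> - bsupp q"
  define c where "c = (\<Sum>m\<in>T. \<eta> m)"
  define d where "d = (\<Sum>m\<in>T. \<eta> m * ln (\<eta> m))"
  define rest where "rest t = (\<Sum>m\<in>-T. (\<eta> m - q m) * ln (mix t q \<eta> m))" for t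
  have T_pos: "0 < \<eta> m" and T_q: "q m = 0" if "m \<in> T" for m
    using that assms(2) by (auto simp: T_def bsupp_def beliefs_nonneg order_le_neq_trans)
  have "0 < c"
    unfolding c_def using assms(3) T_pos by (intro sum_pos) (auto simp: T_def)
  have "(rest \<longlongrightarrow> (\<Sum>m\<in>-T. (\<eta> m - q m) * ln (q m))) (at_right 0)"
    unfolding rest_def
    by (intro tendsto_sum tendsto_mono[OF _ tendsto_mix_slope_term]) (auto simp: at_le T_def bsupp_def)
  moreover have "filterlim (\<lambda>t. c * ln t) at_bot (at_right 0)"
    by (rule filterlim_tendsto_pos_mult_at_bot[OF tendsto_const \<open>0 < c\<close> ln_at_0])
  ultimately have "filterlim (\<lambda>t. rest t + (d + c * ln t)) at_bot (at_right 0)"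
    by (simp add: filterlim_tendsto_add_at_bot_iff filterlim_tendsto_add_at_bot_iff[OF tendsto_const])
  moreover have "\<forall>\<^sub>F t in at_right 0.
      rest t + (d + c * ln t) = mix_slope q \<eta> t"
    using eventually_at_right_less
  proof eventually_elim
    case (elim t)
    have "(\<Sum>m\<in>T. (\<eta> m - q m) * ln (mix t q \<eta> m)) = (\<Sum>m\<in>T. \<eta> m * ln (\<eta> m) + \<eta> m * ln t)"
      using elim T_pos T_q by (intro sum.cong) (simp_all add: mix_def ln_mult algebra_simps)
    also have "\<dots> = d + c * ln t"
      by (simp add: c_def d_def sum.distrib sum_distrib_right)
    moreover have "(\<Sum>m\<in>UNIV. (\<eta> m - q m) * ln (mix t q \<eta> m))
        = (\<Sum>m\<in>UNIV - T. (\<eta> m - q m) * ln (mix t q \<eta> m)) + (\<Sum>m\<in>T. (\<eta> m - q m) * ln (mix t q \<eta> m))"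
      by (rule sum.subset_diff) auto
    ultimately show ?case
      by (simp add: rest_def mix_slope_def Compl_eq_Diff_UNIV)
  qed
  ultimately show ?thesis
    by (rule filterlim_cong[OF refl refl, THEN iffD1, rotated])
qed

lemma bsupp_subset_if_entropy_max_on_mix:
  assumes "q \<in> beliefs" "\<eta> \<in> beliefs"
    and max: "\<And>t. mix t q \<eta> \<in> beliefs \<Longrightarrow> entropy (mix t q \<eta>) \<le> entropy q"
  shows "bsupp \<eta> \<subseteq> bsupp q"
proof (rule ccontr)
  assume "\<not> bsupp \<eta> \<subseteq> bsupp q"
  then have "\<forall>\<^sub>F t in at_right 0. mix_slope q \<eta> t \<le> -1"
    using mix_slope_tendsto_at_bot[OF assms(1,2)] by (simp add: filterlim_at_bot)
  moreover have "\<forall>\<^sub>F t in at_right 0. 0 \<le> mix_slope q \<eta> t"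
    using eventually_at_right_real[OF zero_less_one]
  proof eventually_elim
    case (elim t)
    then have "0 \<le> t * mix_slope q \<eta> t"
      using mix_on_segment[OF assms(1,2)] by (intro mix_slope_sign assms(1) max) auto
    with elim show ?case
      by (simp add: zero_le_mult_iff)
  qed
  ultimately have "\<forall>\<^sub>F t in at_right (0::real). False"
    by eventually_elim simp
  then show False
    by simp
qed

lemma moment_eq_if_entropy_max_on_mix:
  assumes "q \<in> beliefs" "\<eta> \<in> beliefs" "bsupp \<eta> \<subseteq> bsupp q"
    and max: "\<And>t. mix t q \<eta> \<in> beliefs \<Longrightarrow> entropy (mix t q \<eta>) \<le> entropy q"
  shows "(\<Sum>m\<in>UNIV. \<eta> m * ln (q m)) = (\<Sum>m\<in>UNIV. q m * ln (q m))"
proof -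
  define D where "D = (\<Sum>m\<in>UNIV. (\<eta> m - q m) * ln (q m))"
  have "(mix_slope q \<eta> \<longlongrightarrow> D) (at 0)"
    unfolding D_def mix_slope_def[abs_def] using assms(3)
    by (intro tendsto_sum tendsto_mix_slope_term) (auto simp: bsupp_def)
  then have lim_left: "(mix_slope q \<eta> \<longlongrightarrow> D) (at_left 0)"
    and lim_right: "(mix_slope q \<eta> \<longlongrightarrow> D) (at_right 0)"
    by (simp_all add: filterlim_at_split)
  have "\<forall>\<^sub>F t in at 0. 0 \<le> t * mix_slope q \<eta> t"
    using eventually_mix_near_0[OF assms(1-3)]
    by eventually_elim (intro mix_slope_sign assms(1) max; simp)
  then have ev_left: "\<forall>\<^sub>F t in at_left 0. 0 \<le> t * mix_slope q \<eta> t"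
    and ev_right: "\<forall>\<^sub>F t in at_right 0. 0 \<le> t * mix_slope q \<eta> t"
    by (simp_all add: eventually_at_split)
  have "0 \<le> D"
    using lim_right
  proof (rule tendsto_lowerbound)
    show "\<forall>\<^sub>F t in at_right 0. 0 \<le> mix_slope q \<eta> t"
      using ev_right eventually_at_right_less by eventually_elim (simp add: zero_le_mult_iff)
  qed simp
  moreover have "D \<le> 0"
    using lim_left
  proof (rule tendsto_upperbound)
    show "\<forall>\<^sub>F t in at_left 0. mix_slope q \<eta> t \<le> 0"
    proof -
      have "\<forall>\<^sub>F t in at_left 0. t \<in> {-1<..<0::real}"
        by (rule eventually_at_left_real) simp
      with ev_left show ?thesis
        by eventually_elim (simp add: zero_le_mult_iff)
    qed
  qed simp
  ultimately show ?thesis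
    by (simp add: D_def left_diff_distrib sum_subtractf)
qed

theorem lemma2:
  fixes q \<eta> :: "'m::finite \<Rightarrow> real"
  assumes "q \<in> beliefs" and "\<eta> \<in> beliefs"
  shows "can_be_induced q \<eta> \<longleftrightarrow>
           bsupp \<eta> \<subseteq> bsupp q \<and>
           (\<Sum>m\<in>bsupp \<eta>. \<eta> m * ln (q m)) = (\<Sum>m\<in>bsupp q. q m * ln (q m))"
proof
  assume "can_be_induced q \<eta>"
  then obtain F where q_feasible: "q \<in> feasible F \<eta>"
    and max: "\<forall>q'\<in>feasible F \<eta>. q' \<noteq> q \<longrightarrow> entropy q' < entropy q"
    unfolding can_be_induced_def by blast
  have max_on_mix: "entropy (mix t q \<eta>) \<le> entropy q" if "mix t q \<eta> \<in> beliefs" for t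
    using max mix_mem_feasible[OF q_feasible that] by (cases "mix t q \<eta> = q") auto
  have supp: "bsupp \<eta> \<subseteq> bsupp q"
    using bsupp_subset_if_entropy_max_on_mix[OF assms max_on_mix] .
  moreover have "(\<Sum>m\<in>UNIV. \<eta> m * ln (q m)) = (\<Sum>m\<in>UNIV. q m * ln (q m))"
    using moment_eq_if_entropy_max_on_mix[OF assms supp max_on_mix] .
  ultimately show "bsupp \<eta> \<subseteq> bsupp q \<and>
      (\<Sum>m\<in>bsupp \<eta>. \<eta> m * ln (q m)) = (\<Sum>m\<in>bsupp q. q m * ln (q m))"
    by (simp add: sum_bsupp_mult)
next
  assume "bsupp \<eta> \<subseteq> bsupp q \<and>
      (\<Sum>m\<in>bsupp \<eta>. \<eta> m * ln (q m)) = (\<Sum>m\<in>bsupp q. q m * ln (q m))"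
  then show "can_be_induced q \<eta>"
    using assms by (intro can_be_induced_if_moment) (simp_all add: sum_bsupp_mult)
qed

end
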